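(* Let $H$ be a tree and $Q$ a subtree of $H$ with at least one edge. Then $Q$ is a good subgraph of $H$ if and only if no vertex of $N_H[V_Q]$ is a leaf of $H$ and the subgraph of $H$ induced by $N_H[V_Q]$ is the corona of $Q$, that is, $N_H[V_Q]\cap L_H=\emptyset$ and $H[N_H[V_Q]]=Q\circ K_1$.
   Context: Graphs are finite. A leaf is a vertex of degree one; $L_H$ is the set of leaves of $H$; $N_H[X]$ is the closed neighborhood of a vertex set $X$. The corona $Q\circ K_1$ is obtained from $Q$ by attaching one pendant edge (to a new leaf) at each vertex of $Q$; the condition $H[N_H[V_Q]]=Q\circ K_1$ means that the subgraph induced by $N_H[V_Q]$ consists of $Q$ together with, for each vertex $v$ of $Q$, exactly one neighbor of $v$ outside $V_Q$, these neighbors being distinct and pairwise nonadjacent. Good subgraph: Let $Q$ be a subgraph of $H$ without isolated vertices, and $E_Q^-$ the set of edges of $H$ not in $Q$ incident with at least one vertex of $Q$. $Q$ is a good subgraph of $H$ if there exist a set of edges $E$ with $E_Q^-\subseteq E\subseteq E_H\setminus E_Q$ and an orientation $A_E$ of the edges of $E$ (where $d^+(x)$, $d^-(x)$ denote the numbers of arcs of $A_E$ leaving, resp. entering $x$, and $d_H(x)$ is the degree in $H$) such that the arcs of $A_E$ form a family $\mathcal P=\{P_x: x\in V_Q\}$ of oriented paths indexed by the vertices of $Q$ with: (i) every vertex $v$ of $Q$ is the initial vertex of exactly one path of $\mathcal P$, and $d^+(v)=1$, $d^-(v)=d_H(v)-d_Q(v)-1$; (ii) if $x$ is an inner vertex of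 a path of $\mathcal P$, then $d^+(x)=1$ and $d^-(x)=d_H(x)-1$; (iii) if $x$ is an end vertex of a path of $\mathcal P$, then $d^-(x)<d_H(x)$. *)

theory Defs
  imports Main
begin

definition graph :: "'a set \<Rightarrow> 'a set set \<Rightarrow> bool" where
  "graph V E \<longleftrightarrow> finite V \<and> (\<forall>e\<in>E. \<exists>u v. e = {u, v} \<and> u \<noteq> v \<and> u \<in> V \<and> v \<in> V)"

definition deg :: "'a set set \<Rightarrow> 'a \<Rightarrow> nat" where
  "deg E v = card {e \<in> E. v \<in> e}"

definition leaves :: "'a set \<Rightarrow> 'a set set \<Rightarrow> 'a set" where
  "leaves V E = {v \<in> V. deg E v = 1}"

definition closed_nbhd :: "'a set set \<Rightarrow> 'a set \<Rightarrow> 'a set" where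
  "closed_nbhd E X = X \<union> {v. \<exists>x\<in>X. {x, v} \<in> E}"

definition induced_edges :: "'a set set \<Rightarrow> 'a set \<Rightarrow> 'a set set" where
  "induced_edges E S = {e \<in> E. e \<subseteq> S}"

definition connected_graph :: "'a set \<Rightarrow> 'a set set \<Rightarrow> bool" where
  "connected_graph V E \<longleftrightarrow> V \<noteq> {} \<and>
     (\<forall>u\<in>V. \<forall>v\<in>V. (\<lambda>x y. {x, y} \<in> E)\<^sup>*\<^sup>* u v)"

definition has_cycle :: "'a set \<Rightarrow> 'a set set \<Rightarrow> bool" where
  "has_cycle V E \<longleftrightarrow> (\<exists>c. length c \<ge> 3 \<and> distinct c \<and> set c \<subseteq> V \<and>
     (\<forall>i < length c - 1. {c ! i, c ! (i + 1)} \<in> E) \<and> {last c, hd c} \<in> E)"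

definition tree :: "'a set \<Rightarrow> 'a set set \<Rightarrow> bool" where
  "tree V E \<longleftrightarrow> graph V E \<and> connected_graph V E \<and> \<not> has_cycle V E"

definition subgraph :: "'a set \<Rightarrow> 'a set set \<Rightarrow> 'a set \<Rightarrow> 'a set set \<Rightarrow> bool" where
  "subgraph VQ EQ V E \<longleftrightarrow> VQ \<subseteq> V \<and> EQ \<subseteq> E \<and> graph VQ EQ"

definition subtree :: "'a set \<Rightarrow> 'a set set \<Rightarrow> 'a set \<Rightarrow> 'a set set \<Rightarrow> bool" where
  "subtree VQ EQ V E \<longleftrightarrow> subgraph VQ EQ V E \<and> tree VQ EQ"

definition no_isolated :: "'a set \<Rightarrow> 'a set set \<Rightarrow> bool" where
  "no_isolated VQ EQ \<longleftrightarrow> (\<forall>v\<in>VQ. \<exists>e\<in>EQ. v \<in> e)"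

text \<open>Corona Q o K1: the graph (V',E') is Q with one new pendant vertex f v attached at each v.\<close>
definition is_corona :: "'a set \<Rightarrow> 'a set set \<Rightarrow> 'a set \<Rightarrow> 'a set set \<Rightarrow> bool" where
  "is_corona V' E' VQ EQ \<longleftrightarrow> VQ \<subseteq> V' \<and>
     (\<exists>f. bij_betw f VQ (V' - VQ) \<and> E' = EQ \<union> {{v, f v} | v. v \<in> VQ})"

definition orientation :: "'a set set \<Rightarrow> ('a \<times> 'a) set \<Rightarrow> bool" where
  "orientation Ed A \<longleftrightarrow> (\<forall>(u, v)\<in>A. {u, v} \<in> Ed) \<and>
     (\<forall>e\<in>Ed. \<exists>!a. a \<in> A \<and> {fst a, snd a} = e)"

definition outdeg :: "('a \<times> 'a) set \<Rightarrow> 'a \<Rightarrow> nat" where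
  "outdeg A x = card {y. (x, y) \<in> A}"

definition indeg :: "('a \<times> 'a) set \<Rightarrow> 'a \<Rightarrow> nat" where
  "indeg A x = card {y. (y, x) \<in> A}"

definition dpath :: "('a \<times> 'a) set \<Rightarrow> 'a list \<Rightarrow> bool" where
  "dpath A p \<longleftrightarrow> distinct p \<and> length p \<ge> 2 \<and>
     (\<forall>i < length p - 1. (p ! i, p ! (i + 1)) \<in> A)"

definition path_arcs :: "'a list \<Rightarrow> ('a \<times> 'a) set" where
  "path_arcs p = set (zip p (tl p))"

definition edges_minus :: "'a set set \<Rightarrow> 'a set \<Rightarrow> 'a set set \<Rightarrow> 'a set set" where
  "edges_minus E VQ EQ = {e \<in> E - EQ. e \<inter> VQ \<noteq> {}}"

definition good_subgraph :: "'a set \<Rightarrow> 'a set set \<Rightarrow> 'a set \<Rightarrow> 'a set set \<Rightarrow> bool" where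
  "good_subgraph V E VQ EQ \<longleftrightarrow>
     subgraph VQ EQ V E \<and> no_isolated VQ EQ \<and>
     (\<exists>Ed A P.
        edges_minus E VQ EQ \<subseteq> Ed \<and> Ed \<subseteq> E - EQ \<and> orientation Ed A \<and>
        \<comment> \<open>the arcs of A form the family of oriented paths P x, x in VQ, starting at x\<close>
        (\<forall>x\<in>VQ. dpath A (P x) \<and> hd (P x) = x) \<and>
        (\<forall>x\<in>VQ. \<forall>y\<in>VQ. x \<noteq> y \<longrightarrow> path_arcs (P x) \<inter> path_arcs (P y) = {}) \<and>
        A = (\<Union>x\<in>VQ. path_arcs (P x)) \<and>
        \<comment> \<open>(i)\<close>
        (\<forall>v\<in>VQ. card {x \<in> VQ. hd (P x) = v} = 1 \<and> outdeg A v = 1 \<and>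
            int (indeg A v) = int (deg E v) - int (deg EQ v) - 1) \<and>
        \<comment> \<open>(ii) inner vertices\<close>
        (\<forall>x\<in>VQ. \<forall>i. 0 < i \<and> i < length (P x) - 1 \<longrightarrow>
            outdeg A (P x ! i) = 1 \<and> int (indeg A (P x ! i)) = int (deg E (P x ! i)) - 1) \<and>
        \<comment> \<open>(iii) end vertices\<close>
        (\<forall>x\<in>VQ. indeg A (hd (P x)) < deg E (hd (P x)) \<and>
                 indeg A (last (P x)) < deg E (last (P x))))"

end

theory Submission
  imports Defs "HOL-Library.Transitive_Closure_Table"
begin

(* Since H is a tree and Q a subtree, no path of H can leave Q and come back: a path between
   two vertices of Q whose inner vertices avoid Q must be a single edge of Q, for otherwise it
   would close a cycle with the path joining its ends inside Q.

   If Q is good, an inner vertex of a path P_x has indegree d_H - 1, while a vertex v of Q has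
   indegree d_H(v) - d_Q(v) - 1 < d_H(v) - 1; so inner vertices lie outside Q, and a path entering
   Q would leave Q and come back.  Hence no arc enters Q, every vertex v of Q has exactly one
   incident edge outside Q, leading to the second vertex f(v) of P_v, and condition (iii) gives
   d_H(f(v)) >= 2.  Conversely, if every v in V_Q has exactly one edge {v, f(v)} outside Q and
   d_H(f(v)) >= 2, the one-arc paths (v, f(v)) witness goodness.  Finally, by the tree property
   again, the existence of such an f is exactly the statement that H[N_H[V_Q]] is the corona
   of Q and that N_H[V_Q] contains no leaf. *)

abbreviation adj :: "'a set set \<Rightarrow> 'a \<Rightarrow> 'a \<Rightarrow> bool" where
  "adj E x y \<equiv> {x, y} \<in> E"

lemma hd_butlast_tl_last: "2 \<le> length p \<Longrightarrow> p = hd p # butlast (tl p) @ [last p]"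
  by (cases p) auto

lemma set_butlast_tl_nth:
  assumes "y \<in> set (butlast (tl p))"
  obtains i where "0 < i" "i < length p - 1" "p ! i = y"
proof -
  obtain j where "j < length (butlast (tl p))" "butlast (tl p) ! j = y"
    using assms by (metis in_set_conv_nth)
  then show ?thesis using that[of "Suc j"] by (cases p) (auto simp: nth_butlast)
qed

lemma successively_rtrancl_path:
  "rtrancl_path r x xs y \<Longrightarrow> successively r (x # xs) \<and> last (x # xs) = y"
  by (induction rule: rtrancl_path.induct) simp_all

lemma rtranclp_distinct_path:
  assumes "r\<^sup>*\<^sup>* x y"
  obtains xs where "distinct (x # xs)" "successively r (x # xs)" "last (x # xs) = y"
proof -
  obtain xs where "rtrancl_path r x xs y"
    using assms by (auto simp: rtranclp_eq_rtrancl_path)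
  then obtain xs' where path: "rtrancl_path r x xs' y" and "distinct (x # xs')"
    by (rule rtrancl_path_distinct)
  then show ?thesis using that successively_rtrancl_path[OF path] by simp
qed

lemma graph_finite_edges: "graph V E \<Longrightarrow> finite E"
  unfolding graph_def by (metis (no_types, lifting) Pow_iff empty_subsetI finite_Pow_iff
      finite_subset insert_subset subsetI)

lemma graph_edge_endpoints: "graph V E \<Longrightarrow> {a, b} \<in> E \<Longrightarrow> a \<in> V \<and> b \<in> V \<and> a \<noteq> b"
  unfolding graph_def by (metis doubleton_eq_iff)

lemma graph_edge_incident: "graph V E \<Longrightarrow> e \<in> E \<Longrightarrow> x \<in> e \<Longrightarrow> \<exists>y. e = {x, y}"
  unfolding graph_def by (metis insert_commute insertE singletonD)

lemma deg_pos: "finite E \<Longrightarrow> e \<in> E \<Longrightarrow> x \<in> e \<Longrightarrow> 0 < deg E x"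
  unfolding deg_def by (auto simp: card_gt_0_iff)

lemma successively_adj_subset:
  "graph V E \<Longrightarrow> successively (adj E) (x # xs) \<Longrightarrow> set xs \<subseteq> V"
  by (induction xs arbitrary: x) (auto simp: successively_Cons dest: graph_edge_endpoints)

lemma deg_eq_Suc_iff_unique_neighbour:
  assumes "graph V E" "F \<subseteq> E" "{v, w} \<in> E - F"
  shows "deg E v = deg F v + 1 \<longleftrightarrow> (\<forall>u. {v, u} \<in> E - F \<longrightarrow> u = w)"
proof -
  define S where "S = {e \<in> E - F. v \<in> e}"
  have fin: "finite E" using assms(1) by (rule graph_finite_edges)
  have "{e \<in> E. v \<in> e} = {e \<in> F. v \<in> e} \<union> S" unfolding S_def using assms(2) by blast
  then have "deg E v = card ({e \<in> F. v \<in> e} \<union> S)" unfolding deg_def by simp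
  also have "\<dots> = deg F v + card S"
    unfolding deg_def S_def
    by (rule card_Un_disjoint) (use fin finite_subset[OF assms(2) fin] in auto)
  finally have "deg E v = deg F v + card S" .
  moreover have "{v, w} \<in> S" using assms(3) by (simp add: S_def)
  then have "card S = 1 \<longleftrightarrow> S = {{v, w}}" by (auto simp: card_1_singleton_iff)
  moreover have "S = {{v, w}} \<longleftrightarrow> (\<forall>u. {v, u} \<in> E - F \<longrightarrow> u = w)"
  proof
    assume "S = {{v, w}}"
    then show "\<forall>u. {v, u} \<in> E - F \<longrightarrow> u = w"
      unfolding S_def
      by (metis (no_types, lifting) doubleton_eq_iff insertI1 mem_Collect_eq singletonD)
  next
    assume unique: "\<forall>u. {v, u} \<in> E - F \<longrightarrow> u = w"
    have "e = {v, w}" if "e \<in> S" for e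
      using that unique graph_edge_incident[OF assms(1)] unfolding S_def
      by (metis (no_types, lifting) DiffD1 mem_Collect_eq)
    then show "S = {{v, w}}" using \<open>{v, w} \<in> S\<close> by blast
  qed
  ultimately show ?thesis by simp
qed

lemma connected_no_isolated:
  assumes "graph V E" "connected_graph V E" "E \<noteq> {}"
  shows "no_isolated V E"
  unfolding no_isolated_def
proof
  fix v assume "v \<in> V"
  obtain a b where "{a, b} \<in> E"
    using assms(1,3) unfolding graph_def by (metis all_not_in_conv)
  then have "a \<in> V" "b \<in> V" "a \<noteq> b" using graph_edge_endpoints[OF assms(1)] by auto
  then obtain w where "w \<in> V" "w \<noteq> v" by metis
  then have "(adj E)\<^sup>*\<^sup>* v w" using assms(2) \<open>v \<in> V\<close> unfolding connected_graph_def by blast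
  then obtain y where "{v, y} \<in> E" using \<open>w \<noteq> v\<close> by (blast elim: converse_rtranclpE)
  then show "\<exists>e\<in>E. v \<in> e" by blast
qed

lemma has_cycleI:
  assumes "distinct c" "3 \<le> length c" "set c \<subseteq> V" "successively (adj E) c" "{last c, hd c} \<in> E"
  shows "has_cycle V E"
  using assms unfolding has_cycle_def successively_conv_nth by (intro exI[of _ c]) auto

lemma acyclic_bypass_is_subgraph_edge:
  assumes "graph V E" "\<not> has_cycle V E" "subgraph VQ EQ V E" "connected_graph VQ EQ"
    and bypass: "distinct (a # m @ [b])" "successively (adj E) (a # m @ [b])"
    and "a \<in> VQ" "b \<in> VQ" and outside: "set m \<inter> VQ = {}"
  shows "m = [] \<and> {a, b} \<in> EQ"
proof (rule ccontr)
  assume not_edge: "\<not> (m = [] \<and> {a, b} \<in> EQ)"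
  have gQ: "graph VQ EQ" and "VQ \<subseteq> V" "EQ \<subseteq> E"
    using assms(3) unfolding subgraph_def by auto
  obtain qs where q: "distinct (b # qs)" "successively (adj EQ) (b # qs)" "last (b # qs) = a"
    using assms(4) \<open>a \<in> VQ\<close> \<open>b \<in> VQ\<close> unfolding connected_graph_def
    by (metis rtranclp_distinct_path)
  have "a \<noteq> b" using bypass(1) by simp
  then obtain qs' where qs': "qs = qs' @ [a]"
    using q(3) by (metis append_butlast_last_id last.simps)
  define c where "c = (b # qs' @ [a]) @ m"
  have "set (b # qs) \<subseteq> VQ" using successively_adj_subset[OF gQ q(2)] \<open>b \<in> VQ\<close> by simp
  moreover have "set m \<subseteq> V" using successively_adj_subset[OF assms(1) bypass(2)] by simp
  ultimately have "set c \<subseteq> V" using \<open>VQ \<subseteq> V\<close> by (auto simp: c_def qs')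
  moreover have "distinct c"
    using q(1) bypass(1) \<open>set (b # qs) \<subseteq> VQ\<close> outside by (auto simp: c_def qs')
  moreover have "successively (adj E) c"
  proof -
    have "successively (adj E) (b # qs' @ [a])"
      using q(2) \<open>EQ \<subseteq> E\<close> qs' by (auto elim: successively_mono)
    moreover have "successively (adj E) (a # m)"
      using bypass(2) successively_append_iff[of _ "a # m" "[b]"] by simp
    ultimately show ?thesis
      unfolding c_def successively_append_iff by (auto simp: successively_Cons)
  qed
  moreover have "{last c, hd c} \<in> E"
  proof -
    have "{last (a # m), b} \<in> E"
      using bypass(2) successively_append_iff[of _ "a # m" "[b]"] by simp
    moreover have "last c = last (a # m)" "hd c = b" by (simp_all add: c_def)
    ultimately show ?thesis by simp
  qed
  moreover have "3 \<le> length c"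
  proof (cases "m = [] \<and> qs' = []")
    case True
    then show ?thesis using q(2) not_edge by (simp add: qs' insert_commute)
  qed (auto simp: c_def Suc_le_eq)
  ultimately show False using has_cycleI assms(2) by blast
qed

lemma orientation_pendant_edges:
  assumes "f ` S \<inter> S = {}"
  shows "orientation ((\<lambda>v. {v, f v}) ` S) ((\<lambda>v. (v, f v)) ` S)"
  unfolding orientation_def
proof (intro conjI)
  show "\<forall>(u, w) \<in> (\<lambda>v. (v, f v)) ` S. {u, w} \<in> (\<lambda>v. {v, f v}) ` S" by blast
  show "\<forall>e \<in> (\<lambda>v. {v, f v}) ` S. \<exists>!a. a \<in> (\<lambda>v. (v, f v)) ` S \<and> {fst a, snd a} = e"
  proof
    fix e assume "e \<in> (\<lambda>v. {v, f v}) ` S"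
    then obtain v where v: "v \<in> S" "e = {v, f v}" by blast
    have same_edge: "w = v" if "w \<in> S" "{w, f w} = {v, f v}" for w
      using that v(1) assms doubleton_eq_iff[of w "f w" v "f v"] by blast
    have "a = (v, f v)" if arc: "a \<in> (\<lambda>v. (v, f v)) ` S" and "{fst a, snd a} = e" for a
    proof -
      obtain w where w: "w \<in> S" "a = (w, f w)" using arc by blast
      then have "w = v" using same_edge[OF w(1)] \<open>{fst a, snd a} = e\<close> v(2) by simp
      then show ?thesis using w(2) by simp
    qed
    then show "\<exists>!a. a \<in> (\<lambda>v. (v, f v)) ` S \<and> {fst a, snd a} = e"
      using v by (intro ex1I[of _ "(v, f v)"]) auto
  qed
qed

lemma indeg_pendant_arcs: "indeg ((\<lambda>v. (v, f v)) ` S) u = card {v \<in> S. f v = u}"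
  unfolding indeg_def by (rule arg_cong[where f = card]) auto

lemma outdeg_pendant_arcs: "v \<in> S \<Longrightarrow> outdeg ((\<lambda>v. (v, f v)) ` S) v = 1"
  unfolding outdeg_def by (simp add: image_iff)

locale tree_subtree =
  fixes V :: "'a set" and E :: "'a set set" and VQ :: "'a set" and EQ :: "'a set set"
  assumes tree: "tree V E"
    and subtree: "subtree VQ EQ V E"
    and subtree_has_edge: "EQ \<noteq> {}"
begin

lemma graph: "graph V E"
  using tree unfolding tree_def by blast

lemma finite_edges: "finite E"
  using graph by (rule graph_finite_edges)

lemma graph_Q: "graph VQ EQ" and EQ_subset: "EQ \<subseteq> E"
  using subtree unfolding subtree_def subgraph_def by auto

lemma edge_Q_subset: "e \<in> EQ \<Longrightarrow> e \<subseteq> VQ"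
proof -
  assume "e \<in> EQ"
  then obtain u w where "e = {u, w}" "u \<in> VQ" "w \<in> VQ"
    using graph_Q unfolding graph_def by blast
  then show ?thesis by simp
qed

lemma no_isolated_Q: "no_isolated VQ EQ"
  using connected_no_isolated graph_Q subtree subtree_has_edge
  unfolding subtree_def tree_def by blast

lemma deg_Q_pos: "v \<in> VQ \<Longrightarrow> 0 < deg EQ v"
  using no_isolated_Q deg_pos[OF graph_finite_edges[OF graph_Q]]
  unfolding no_isolated_def by blast

lemma bypass_is_edge:
  assumes "distinct (a # m @ [b])" "successively (adj E) (a # m @ [b])"
    and "a \<in> VQ" "b \<in> VQ" "set m \<inter> VQ = {}"
  shows "m = [] \<and> {a, b} \<in> EQ"
  using acyclic_bypass_is_subgraph_edge[OF graph _ _ _ assms] tree subtree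
  unfolding tree_def subtree_def by blast

lemma edge_between_Q_vertices: "a \<in> VQ \<Longrightarrow> b \<in> VQ \<Longrightarrow> {a, b} \<in> E \<Longrightarrow> {a, b} \<in> EQ"
  using bypass_is_edge[of a "[]" b] graph_edge_endpoints[OF graph] by simp

definition outer_neighbour :: "('a \<Rightarrow> 'a) \<Rightarrow> bool" where
  "outer_neighbour f \<longleftrightarrow> (\<forall>v\<in>VQ. \<forall>u. {v, u} \<in> E - EQ \<longleftrightarrow> u = f v)"

lemma outer_neighbour_edge: "outer_neighbour f \<Longrightarrow> v \<in> VQ \<Longrightarrow> {v, f v} \<in> E - EQ"
  unfolding outer_neighbour_def by blast

lemma outer_neighbour_unique: "outer_neighbour f \<Longrightarrow> v \<in> VQ \<Longrightarrow> {v, u} \<in> E - EQ \<Longrightarrow> u = f v"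
  unfolding outer_neighbour_def by blast

lemma outer_neighbour_notin: "outer_neighbour f \<Longrightarrow> v \<in> VQ \<Longrightarrow> f v \<notin> VQ"
  using outer_neighbour_edge edge_between_Q_vertices by blast

lemma outer_neighbour_inj:
  assumes f: "outer_neighbour f"
  shows "inj_on f VQ"
proof (rule inj_onI, rule ccontr)
  fix v w assume "v \<in> VQ" "w \<in> VQ" "f v = f w" "v \<noteq> w"
  have "{v, f v} \<in> E" using outer_neighbour_edge[OF f \<open>v \<in> VQ\<close>] by blast
  moreover have "{f v, w} \<in> E"
    using outer_neighbour_edge[OF f \<open>w \<in> VQ\<close>] \<open>f v = f w\<close> by (simp add: insert_commute)
  moreover have "f v \<notin> VQ" using outer_neighbour_notin[OF f \<open>v \<in> VQ\<close>] .
  then have "v \<noteq> f v" "f v \<noteq> w" using \<open>v \<in> VQ\<close> \<open>w \<in> VQ\<close> by auto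
  ultimately show False
    using bypass_is_edge[of v "[f v]" w] \<open>v \<in> VQ\<close> \<open>w \<in> VQ\<close> \<open>v \<noteq> w\<close> \<open>f v \<notin> VQ\<close> by simp
qed

lemma outer_neighbour_iff_deg:
  assumes "\<And>v. v \<in> VQ \<Longrightarrow> {v, f v} \<in> E - EQ"
  shows "outer_neighbour f \<longleftrightarrow> (\<forall>v\<in>VQ. deg E v = deg EQ v + 1)"
  using deg_eq_Suc_iff_unique_neighbour[OF graph EQ_subset assms] assms
  unfolding outer_neighbour_def by blast

lemma deg_outer_neighbour:
  "outer_neighbour f \<Longrightarrow> v \<in> VQ \<Longrightarrow> deg E v = deg EQ v + 1"
  using outer_neighbour_iff_deg outer_neighbour_edge by blast

lemma closed_nbhd_outer_neighbour:
  assumes "outer_neighbour f"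
  shows "closed_nbhd E VQ = VQ \<union> f ` VQ"
proof -
  have "x \<in> VQ \<union> f ` VQ" if "v \<in> VQ" "{v, x} \<in> E" for v x
  proof (cases "x \<in> VQ")
    case False
    then have "{v, x} \<notin> EQ" using edge_Q_subset by blast
    then show ?thesis using assms \<open>v \<in> VQ\<close> \<open>{v, x} \<in> E\<close> unfolding outer_neighbour_def by blast
  qed simp
  then show ?thesis
    using outer_neighbour_edge[OF assms] unfolding closed_nbhd_def by blast
qed

lemma induced_edges_outer_neighbour:
  assumes f: "outer_neighbour f"
  shows "induced_edges E (closed_nbhd E VQ) = EQ \<union> {{v, f v} | v. v \<in> VQ}"
proof
  show "EQ \<union> {{v, f v} | v. v \<in> VQ} \<subseteq> induced_edges E (closed_nbhd E VQ)"
    using EQ_subset edge_Q_subset outer_neighbour_edge[OF f] closed_nbhd_outer_neighbour[OF f]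
    unfolding induced_edges_def by blast
next
  have "e \<in> {{v, f v} | v. v \<in> VQ}"
    if "e \<in> E" "e \<notin> EQ" "e \<subseteq> VQ \<union> f ` VQ" for e
  proof -
    obtain a b where e: "e = {a, b}" and "a \<noteq> b"
      using \<open>e \<in> E\<close> graph graph_edge_endpoints unfolding graph_def by metis
    have pendant: "y = f x" if "x \<in> VQ" "e = {x, y}" for x y
      using f \<open>e \<in> E\<close> \<open>e \<notin> EQ\<close> that unfolding outer_neighbour_def by blast
    consider "a \<in> VQ" | "b \<in> VQ" | v w where "v \<in> VQ" "w \<in> VQ" "a = f v" "b = f w"
      using \<open>e \<subseteq> VQ \<union> f ` VQ\<close> e by blast
    then show ?thesis
    proof cases
      case 1
      then show ?thesis using pendant e by blast
    next
      case 2
      then show ?thesis using pendant e by (metis (mono_tags, lifting) insert_commute mem_Collect_eq)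
    next
      case 3
      have "f v \<notin> VQ" "f w \<notin> VQ" using 3 outer_neighbour_notin[OF f] by auto
      then have "distinct [v, f v, f w, w]" using 3 \<open>a \<noteq> b\<close> by auto
      moreover have "{v, f v} \<in> E" "{f w, w} \<in> E"
        using 3 outer_neighbour_edge[OF f] by (auto simp: insert_commute)
      ultimately have False
        using bypass_is_edge[of v "[f v, f w]" w] 3 \<open>e \<in> E\<close> e \<open>f v \<notin> VQ\<close> \<open>f w \<notin> VQ\<close> by auto
      then show ?thesis ..
    qed
  qed
  then show "induced_edges E (closed_nbhd E VQ) \<subseteq> EQ \<union> {{v, f v} | v. v \<in> VQ}"
    unfolding induced_edges_def closed_nbhd_outer_neighbour[OF f] by blast
qed

lemma is_corona_iff_outer_neighbour:
  "is_corona (closed_nbhd E VQ) (induced_edges E (closed_nbhd E VQ)) VQ EQ \<longleftrightarrow>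
     (\<exists>f. outer_neighbour f)"
proof
  assume "is_corona (closed_nbhd E VQ) (induced_edges E (closed_nbhd E VQ)) VQ EQ"
  then obtain f where bij: "bij_betw f VQ (closed_nbhd E VQ - VQ)"
    and induced: "induced_edges E (closed_nbhd E VQ) = EQ \<union> {{v, f v} | v. v \<in> VQ}"
    unfolding is_corona_def by blast
  have "{v, f v} \<in> E - EQ" if "v \<in> VQ" for v
  proof -
    have "f v \<notin> VQ" using bij that unfolding bij_betw_def by blast
    then show ?thesis
      using induced that edge_Q_subset unfolding induced_edges_def by blast
  qed
  moreover have "u = f v" if "v \<in> VQ" "{v, u} \<in> E - EQ" for v u
  proof -
    have "{v, u} \<subseteq> closed_nbhd E VQ" using that unfolding closed_nbhd_def by blast
    then have "{v, u} \<in> induced_edges E (closed_nbhd E VQ)"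
      using that unfolding induced_edges_def by blast
    then have "{v, u} \<in> {{w, f w} | w. w \<in> VQ}" using induced that(2) by blast
    then obtain w where "w \<in> VQ" "{v, u} = {w, f w}" by blast
    moreover have "f w \<notin> VQ" using bij \<open>w \<in> VQ\<close> unfolding bij_betw_def by blast
    ultimately show "u = f v" using \<open>v \<in> VQ\<close> by (metis doubleton_eq_iff)
  qed
  ultimately show "\<exists>f. outer_neighbour f" unfolding outer_neighbour_def by blast
next
  assume "\<exists>f. outer_neighbour f"
  then obtain f where f: "outer_neighbour f" ..
  have "bij_betw f VQ (closed_nbhd E VQ - VQ)"
    using outer_neighbour_inj[OF f] outer_neighbour_notin[OF f] closed_nbhd_outer_neighbour[OF f]
    unfolding bij_betw_def by blast
  then show "is_corona (closed_nbhd E VQ) (induced_edges E (closed_nbhd E VQ)) VQ EQ"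
    using induced_edges_outer_neighbour[OF f] closed_nbhd_outer_neighbour[OF f]
    unfolding is_corona_def by blast
qed

lemma no_leaf_in_closed_nbhd_iff:
  assumes f: "outer_neighbour f"
  shows "closed_nbhd E VQ \<inter> leaves V E = {} \<longleftrightarrow> (\<forall>v\<in>VQ. 2 \<le> deg E (f v))"
proof -
  have "deg E v \<noteq> 1" if "v \<in> VQ" for v
    using deg_outer_neighbour[OF f that] deg_Q_pos[OF that] by simp
  moreover have "f v \<in> V" "0 < deg E (f v)" if "v \<in> VQ" for v
    using outer_neighbour_edge[OF f that] graph_edge_endpoints[OF graph] deg_pos[OF finite_edges]
    by auto
  ultimately have "closed_nbhd E VQ \<inter> leaves V E = {} \<longleftrightarrow> (\<forall>v\<in>VQ. deg E (f v) \<noteq> 1)"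
    unfolding closed_nbhd_outer_neighbour[OF f] leaves_def by blast
  also have "\<dots> \<longleftrightarrow> (\<forall>v\<in>VQ. 2 \<le> deg E (f v))"
    using \<open>\<And>v. v \<in> VQ \<Longrightarrow> 0 < deg E (f v)\<close> by (metis One_nat_def Suc_1 Suc_leI le_neq_implies_less not_less_eq_eq)
  finally show ?thesis .
qed

lemma corona_without_leaves_iff_outer_neighbour:
  "closed_nbhd E VQ \<inter> leaves V E = {} \<and>
     is_corona (closed_nbhd E VQ) (induced_edges E (closed_nbhd E VQ)) VQ EQ \<longleftrightarrow>
   (\<exists>f. outer_neighbour f \<and> (\<forall>v\<in>VQ. 2 \<le> deg E (f v)))"
  using is_corona_iff_outer_neighbour no_leaf_in_closed_nbhd_iff by blast

lemma good_subgraph_if_outer_neighbour: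
  assumes f: "outer_neighbour f" and deg_f: "\<forall>v\<in>VQ. 2 \<le> deg E (f v)"
  shows "good_subgraph V E VQ EQ"
proof -
  define A where "A = (\<lambda>v. (v, f v)) ` VQ"
  define P where "P = (\<lambda>v. [v, f v])"
  have notin: "f v \<notin> VQ" if "v \<in> VQ" for v
    using outer_neighbour_notin[OF f that] .
  have path_arcs_P: "path_arcs (P v) = {(v, f v)}" for v
    unfolding P_def path_arcs_def by simp
  have indeg_Q: "indeg A v = 0" if "v \<in> VQ" for v
    using notin that unfolding A_def indeg_pendant_arcs by (metis (mono_tags, lifting) card_eq_0_iff empty_Collect_eq)
  have indeg_f: "indeg A (f v) = 1" if "v \<in> VQ" for v
  proof -
    have "{w \<in> VQ. f w = f v} = {v}"
      using outer_neighbour_inj[OF f] that unfolding inj_on_def by blast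
    then show ?thesis unfolding A_def indeg_pendant_arcs by simp
  qed
  have edges_minus: "edges_minus E VQ EQ \<subseteq> (\<lambda>v. {v, f v}) ` VQ"
  proof
    fix e assume "e \<in> edges_minus E VQ EQ"
    then obtain v where "v \<in> VQ" "v \<in> e" "e \<in> E - EQ" unfolding edges_minus_def by blast
    moreover obtain u where u: "e = {v, u}" using graph_edge_incident[OF graph] calculation by blast
    ultimately have "u = f v" using outer_neighbour_unique[OF f] by blast
    show "e \<in> (\<lambda>v. {v, f v}) ` VQ" by (rule rev_image_eqI[OF \<open>v \<in> VQ\<close>]) (simp add: u \<open>u = f v\<close>)
  qed
  show ?thesis
    unfolding good_subgraph_def
  proof (intro conjI exI)
    show "subgraph VQ EQ V E" using subtree unfolding subtree_def by blast
    show "no_isolated VQ EQ" by (rule no_isolated_Q)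
    show "edges_minus E VQ EQ \<subseteq> (\<lambda>v. {v, f v}) ` VQ" by (rule edges_minus)
    show "(\<lambda>v. {v, f v}) ` VQ \<subseteq> E - EQ" using outer_neighbour_edge[OF f] by blast
    show "orientation ((\<lambda>v. {v, f v}) ` VQ) A"
      unfolding A_def using notin by (intro orientation_pendant_edges) blast
    show "\<forall>x\<in>VQ. dpath A (P x) \<and> hd (P x) = x"
    proof
      fix x assume "x \<in> VQ"
      then have "x \<noteq> f x" "(x, f x) \<in> A" using notin[OF \<open>x \<in> VQ\<close>] unfolding A_def by auto
      then show "dpath A (P x) \<and> hd (P x) = x" unfolding dpath_def P_def by simp
    qed
    show "\<forall>x\<in>VQ. \<forall>y\<in>VQ. x \<noteq> y \<longrightarrow> path_arcs (P x) \<inter> path_arcs (P y) = {}"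
      unfolding path_arcs_P by blast
    show "A = (\<Union>x\<in>VQ. path_arcs (P x))"
      unfolding path_arcs_P A_def by blast
    show "\<forall>v\<in>VQ. card {x \<in> VQ. hd (P x) = v} = 1 \<and> outdeg A v = 1 \<and>
            int (indeg A v) = int (deg E v) - int (deg EQ v) - 1"
    proof
      fix v assume v: "v \<in> VQ"
      have "{x \<in> VQ. hd (P x) = v} = {v}" using v unfolding P_def by auto
      then show "card {x \<in> VQ. hd (P x) = v} = 1 \<and> outdeg A v = 1 \<and>
          int (indeg A v) = int (deg E v) - int (deg EQ v) - 1"
        using indeg_Q[OF v] deg_outer_neighbour[OF f v] outdeg_pendant_arcs[OF v, of f]
        unfolding A_def by simp
    qed
    show "\<forall>x\<in>VQ. \<forall>i. 0 < i \<and> i < length (P x) - 1 \<longrightarrow>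
            outdeg A (P x ! i) = 1 \<and> int (indeg A (P x ! i)) = int (deg E (P x ! i)) - 1"
      unfolding P_def by simp
    show "\<forall>x\<in>VQ. indeg A (hd (P x)) < deg E (hd (P x)) \<and>
                 indeg A (last (P x)) < deg E (last (P x))"
      using indeg_Q indeg_f deg_f deg_outer_neighbour[OF f] unfolding P_def by fastforce
  qed
qed

end

text \<open>The consequences of goodness used for the converse direction.\<close>

locale good_path_family = tree_subtree +
  fixes A :: "('a \<times> 'a) set" and P :: "'a \<Rightarrow> 'a list"
  assumes arc_outside_Q: "(a, b) \<in> A \<Longrightarrow> {a, b} \<in> E - EQ"
    and dpath_P: "x \<in> VQ \<Longrightarrow> dpath A (P x)"
    and hd_P: "x \<in> VQ \<Longrightarrow> hd (P x) = x"
    and arcs_P: "A = (\<Union>x\<in>VQ. path_arcs (P x))"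
    and indeg_start: "v \<in> VQ \<Longrightarrow> int (indeg A v) = int (deg E v) - int (deg EQ v) - 1"
    and indeg_inner: "x \<in> VQ \<Longrightarrow> 0 < i \<Longrightarrow> i < length (P x) - 1 \<Longrightarrow>
      int (indeg A (P x ! i)) = int (deg E (P x ! i)) - 1"
    and indeg_last: "x \<in> VQ \<Longrightarrow> indeg A (last (P x)) < deg E (last (P x))"
begin

lemma length_P: "x \<in> VQ \<Longrightarrow> 2 \<le> length (P x)"
  using dpath_P unfolding dpath_def by blast

lemma arc_P: "x \<in> VQ \<Longrightarrow> Suc i < length (P x) \<Longrightarrow> (P x ! i, P x ! Suc i) \<in> A"
  using dpath_P unfolding dpath_def by simp

lemma first_arc_P:
  assumes "x \<in> VQ"
  shows "(x, P x ! 1) \<in> A"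
proof -
  have "1 < length (P x)" using length_P[OF assms] by simp
  then have "P x \<noteq> []" by auto
  then have "P x ! 0 = x" using hd_conv_nth[of "P x"] hd_P[OF assms] by simp
  then show ?thesis using arc_P[OF assms, of 0] \<open>1 < length (P x)\<close> by simp
qed

lemma successively_P: "x \<in> VQ \<Longrightarrow> successively (adj E) (P x)"
  unfolding successively_conv_nth using arc_P arc_outside_Q by blast

lemma inner_vertex_notin_Q:
  assumes "x \<in> VQ" "y \<in> set (butlast (tl (P x)))"
  shows "y \<notin> VQ"
proof
  assume "y \<in> VQ"
  obtain i where "0 < i" "i < length (P x) - 1" "P x ! i = y"
    using assms(2) by (rule set_butlast_tl_nth)
  then have "int (indeg A y) = int (deg E y) - 1" using indeg_inner assms(1) by blast
  then show False using indeg_start[OF \<open>y \<in> VQ\<close>] deg_Q_pos[OF \<open>y \<in> VQ\<close>] by linarith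
qed

lemma no_arc_into_Q:
  assumes "v \<in> VQ"
  shows "(w, v) \<notin> A"
proof
  assume "(w, v) \<in> A"
  then obtain x where x: "x \<in> VQ" "(w, v) \<in> path_arcs (P x)" using arcs_P by blast
  define m where "m = butlast (tl (P x))"
  have P_eq: "P x = x # m @ [last (P x)]"
    using hd_butlast_tl_last[OF length_P[OF x(1)]] hd_P[OF x(1)] unfolding m_def by simp
  have "v \<in> set (tl (P x))" using x(2) unfolding path_arcs_def by (rule set_zip_rightD)
  moreover have "v \<notin> set m" using inner_vertex_notin_Q[OF x(1)] assms unfolding m_def by blast
  ultimately have "v = last (P x)" by (subst (asm) P_eq) simp
  then have P_eq': "P x = x # m @ [v]" using P_eq by simp
  have "m = [] \<and> {x, v} \<in> EQ"
  proof (rule bypass_is_edge[OF _ _ x(1) assms])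
    show "distinct (x # m @ [v])" using dpath_P[OF x(1)] unfolding dpath_def P_eq' by blast
    show "successively (adj E) (x # m @ [v])" using successively_P[OF x(1)] unfolding P_eq' .
    show "set m \<inter> VQ = {}" using inner_vertex_notin_Q[OF x(1)] unfolding m_def by blast
  qed
  then have "(x, v) \<in> A" using first_arc_P[OF x(1)] P_eq' by simp
  then show False using arc_outside_Q \<open>m = [] \<and> {x, v} \<in> EQ\<close> by blast
qed

lemma deg_Q_vertex: "v \<in> VQ \<Longrightarrow> deg E v = deg EQ v + 1"
  using indeg_start[of v] no_arc_into_Q[of v] unfolding indeg_def by simp

lemma outer_neighbour_second_vertex: "outer_neighbour (\<lambda>x. P x ! 1)"
proof -
  have "{v, P v ! 1} \<in> E - EQ" if "v \<in> VQ" for v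
    using arc_outside_Q[OF first_arc_P[OF that]] .
  then show ?thesis using outer_neighbour_iff_deg[of "\<lambda>x. P x ! 1"] deg_Q_vertex by simp
qed

lemma deg_second_vertex:
  assumes "x \<in> VQ"
  shows "2 \<le> deg E (P x ! 1)"
proof -
  have "finite {y. (y, P x ! 1) \<in> A}"
    using arc_outside_Q graph_edge_endpoints[OF graph] graph unfolding graph_def
    by (metis (no_types, lifting) finite_subset mem_Collect_eq subsetI DiffD1)
  then have "0 < indeg A (P x ! 1)"
    using first_arc_P[OF assms] unfolding indeg_def
    by (metis card_gt_0_iff empty_iff mem_Collect_eq)
  moreover consider "length (P x) = 2" | "1 < length (P x) - 1" using length_P[OF assms] by linarith
  then have "indeg A (P x ! 1) < deg E (P x ! 1)"
  proof cases
    case 1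
    then have "P x \<noteq> []" by auto
    then have "P x ! 1 = last (P x)" using 1 by (simp add: last_conv_nth)
    then show ?thesis using indeg_last[OF assms] by simp
  next
    case 2
    then show ?thesis using indeg_inner[OF assms, of 1] by simp
  qed
  ultimately show ?thesis by linarith
qed

end

context tree_subtree
begin

lemma outer_neighbour_if_good_subgraph:
  assumes "good_subgraph V E VQ EQ"
  shows "\<exists>f. outer_neighbour f \<and> (\<forall>v\<in>VQ. 2 \<le> deg E (f v))"
proof -
  obtain Ed A P where "edges_minus E VQ EQ \<subseteq> Ed" and Ed: "Ed \<subseteq> E - EQ" "orientation Ed A"
    and paths: "\<forall>x\<in>VQ. dpath A (P x) \<and> hd (P x) = x" "A = (\<Union>x\<in>VQ. path_arcs (P x))"
    and start: "\<forall>v\<in>VQ. card {x \<in> VQ. hd (P x) = v} = 1 \<and> outdeg A v = 1 \<and>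
            int (indeg A v) = int (deg E v) - int (deg EQ v) - 1"
    and inner: "\<forall>x\<in>VQ. \<forall>i. 0 < i \<and> i < length (P x) - 1 \<longrightarrow>
            outdeg A (P x ! i) = 1 \<and> int (indeg A (P x ! i)) = int (deg E (P x ! i)) - 1"
    and ends: "\<forall>x\<in>VQ. indeg A (hd (P x)) < deg E (hd (P x)) \<and>
                 indeg A (last (P x)) < deg E (last (P x))"
    using assms unfolding good_subgraph_def by blast
  interpret good_path_family V E VQ EQ A P
  proof unfold_locales
    show "{a, b} \<in> E - EQ" if "(a, b) \<in> A" for a b
      using that Ed unfolding orientation_def by blast
  qed (use paths start inner ends in auto)
  show ?thesis using outer_neighbour_second_vertex deg_second_vertex by blast
qed

lemma good_subgraph_iff_outer_neighbour:
  "good_subgraph V E VQ EQ \<longleftrightarrow> (\<exists>f. outer_neighbour f \<and> (\<forall>v\<in>VQ. 2 \<le> deg E (f v)))"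
  using outer_neighbour_if_good_subgraph good_subgraph_if_outer_neighbour by blast

end

theorem proposition7p3:
  fixes V :: "'a set" and E :: "'a set set" and VQ :: "'a set" and EQ :: "'a set set"
  assumes "tree V E"
    and "subtree VQ EQ V E"
    and "EQ \<noteq> {}"
  shows "good_subgraph V E VQ EQ \<longleftrightarrow>
           closed_nbhd E VQ \<inter> leaves V E = {} \<and>
           is_corona (closed_nbhd E VQ) (induced_edges E (closed_nbhd E VQ)) VQ EQ"
proof -
  interpret tree_subtree V E VQ EQ
    using assms by unfold_locales
  show ?thesis
    using good_subgraph_iff_outer_neighbour corona_without_leaves_iff_outer_neighbour by blast
qed

end
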